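(* Let $L$ be an integral lattice containing no vectors of norm one (i.e. no $v$ with $v\cdot v=1$). If $v\in L$ is contained in an obtuse superbase for $L$, then $v\cdot v\le\mathrm{disc}(L)$.
   Context: An integral lattice is a finitely generated free abelian group with a symmetric positive definite integral bilinear form; $\mathrm{disc}(L)$ is the determinant of its Gram matrix. An obtuse superbase of a rank-$k$ lattice $L$ is a set $\{v_0,\dots,v_k\}\subseteq L$ spanning $L$ with $v_i\cdot v_j\le0$ for $i\ne j$ and $v_0+\dots+v_k=0$. *)

theory Defs
  imports "HOL-Analysis.Analysis"
begin

text \<open>A rank-n integral lattice L is modelled as \<int>^n (coordinates w.r.t. a basis)
  together with its Gram matrix G; the bilinear form is x . y = x^T G y.\<close>

definition lat_form :: "int^'n^'n \<Rightarrow> int^'n \<Rightarrow> int^'n \<Rightarrow> int" where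
  "lat_form G x y = (\<Sum>i\<in>UNIV. \<Sum>j\<in>UNIV. x $ i * G $ i $ j * y $ j)"

definition integral_lattice :: "int^'n^'n \<Rightarrow> bool" where
  "integral_lattice G \<longleftrightarrow> transpose G = G \<and> (\<forall>x. x \<noteq> 0 \<longrightarrow> lat_form G x x > 0)"

definition disc :: "int^'n^'n \<Rightarrow> int" where
  "disc G = det G"

text \<open>Obtuse superbase \<open>{v_0,...,v_k}\<close>, indexed by \<open>'n option\<close> (which has k+1 elements).\<close>
definition obtuse_superbase :: "int^'n^'n \<Rightarrow> ('n option \<Rightarrow> int^'n) \<Rightarrow> bool" where
  "obtuse_superbase G v \<longleftrightarrow>
     (\<forall>w. \<exists>c :: 'n option \<Rightarrow> int. w = (\<Sum>i\<in>UNIV. c i *s v i)) \<and>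
     (\<forall>i j. i \<noteq> j \<longrightarrow> lat_form G (v i) (v j) \<le> 0) \<and>
     (\<Sum>i\<in>UNIV. v i) = 0"

end

theory Submission
  imports Defs
begin

text \<open>
  Deleting \<open>v\<^sub>i\<close> from an obtuse superbase leaves a basis of \<open>L\<close>, since \<open>v\<^sub>i\<close> is minus the
  sum of the others. Its Gram matrix \<open>M\<close> has determinant \<open>disc L\<close>, nonpositive off-diagonal
  entries and row sums \<open>-v\<^sub>j \<cdot> v\<^sub>i \<ge> 0\<close>, and its entries add up to \<open>v\<^sub>i \<cdot> v\<^sub>i\<close>. For such an
  integer matrix with \<open>x\<^sup>T M x \<ge> 2\<close> for all \<open>x \<noteq> 0\<close>, the determinant dominates the sum of the
  entries. Pick a row \<open>p\<close> with positive row sum \<open>t\<close>; linearity in row \<open>p\<close> gives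
  \<open>det M = det M' + t det M\<^sub>p\<close>, where \<open>M'\<close> is \<open>M\<close> with \<open>t\<close> subtracted from \<open>M\<^sub>p\<^sub>p\<close> and \<open>M\<^sub>p\<close>
  is the principal minor without \<open>p\<close>. \<open>M'\<close> is still diagonally dominant with nonpositive
  off-diagonal entries, so \<open>det M' \<ge> 0\<close>, and by induction \<open>det M\<^sub>p \<ge> a\<close>, the sum of the entries
  of \<open>M\<^sub>p\<close>. As \<open>M\<^sub>p\<^sub>p \<ge> 2\<close> and \<open>a \<ge> 2\<close>, the sum of the entries of \<open>M\<close> is
  \<open>2t - M\<^sub>p\<^sub>p + a \<le> 2t - 2 + a \<le> t a \<le> det M\<close>.
\<close>

section \<open>Determinants\<close>

text \<open>A principal submatrix on an index set \<open>I\<close> is kept in the ambient index type by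
  padding it with the identity outside \<open>I\<close>; thus \<open>strike_index p A\<close> is the principal
  submatrix of \<open>A\<close> obtained by deleting index \<open>p\<close>.\<close>

definition identity_outside :: "'n set \<Rightarrow> 'a::zero_neq_one^'n^'n \<Rightarrow> bool" where
  "identity_outside I A \<longleftrightarrow> (\<forall>i j. i \<notin> I \<or> j \<notin> I \<longrightarrow> A $ i $ j = (if i = j then 1 else 0))"

definition strike_index :: "'n \<Rightarrow> 'a::zero_neq_one^'n^'n \<Rightarrow> 'a^'n^'n" where
  "strike_index p A = (\<chi> i j. if i = p \<or> j = p then (if i = j then 1 else 0) else A $ i $ j)"

definition reduce_diag :: "'n \<Rightarrow> 'a::ab_group_add \<Rightarrow> 'a^'n^'n \<Rightarrow> 'a^'n^'n" where
  "reduce_diag p t A = (\<chi> i j. if i = p \<and> j = p then A $ i $ j - t else A $ i $ j)"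

lemma det_row_axis:
  fixes A :: "'a::comm_ring_1^'n^'n"
  shows "det (\<chi> i. if i = p then axis p 1 else row i A) = det (strike_index p A)"
  unfolding det_def
proof (rule sum.cong[OF refl])
  fix s assume "s \<in> {s. s permutes (UNIV::'n set)}"
  then have s: "s permutes UNIV" by simp
  show "of_int (sign s) * (\<Prod>i\<in>UNIV. (\<chi> i. if i = p then axis p 1 else row i A) $ i $ s i) =
        of_int (sign s) * (\<Prod>i\<in>UNIV. strike_index p A $ i $ s i)"
  proof (cases "s p = p")
    case True
    then have "s i \<noteq> p" if "i \<noteq> p" for i
      using that s by (metis permutes_inj injD)
    then show ?thesis
      using True by (intro arg_cong[where f="\<lambda>x. _ * x"] prod.cong) (auto simp: strike_index_def axis_def row_def)
  next
    case False
    have "(\<Prod>i\<in>UNIV. (\<chi> i. if i = p then axis p 1 else row i A) $ i $ s i) = 0"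
      by (rule prod_zero) (use False in \<open>auto simp: axis_def intro!: bexI[of _ p]\<close>)
    moreover have "(\<Prod>i\<in>UNIV. strike_index p A $ i $ s i) = 0"
      by (rule prod_zero) (use False in \<open>auto simp: strike_index_def intro!: bexI[of _ p]\<close>)
    ultimately show ?thesis
      by simp
  qed
qed

lemma det_reduce_diag_strike_index:
  fixes A :: "'a::comm_ring_1^'n^'n"
  shows "det A = det (reduce_diag p t A) + t * det (strike_index p A)"
proof -
  let ?B = "reduce_diag p t A"
  have "A = (\<chi> i. if i = p then row p ?B + t *s axis p 1 else row i ?B)"
    by (simp add: vec_eq_iff reduce_diag_def row_def axis_def)
  then have "det A = det (\<chi> i. if i = p then row p ?B + t *s axis p 1 else row i ?B)"
    by simp
  also have "\<dots> = det (\<chi> i. if i = p then row p ?B else row i ?B)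
                      + t * det (\<chi> i. if i = p then axis p 1 else row i ?B)"
    by (simp only: det_row_add det_row_mul)
  also have "(\<chi> i. if i = p then row p ?B else row i ?B) = ?B"
    by (simp add: vec_eq_iff row_def)
  also have "(\<chi> i. if i = p then axis p 1 else row i ?B) = (\<chi> i. if i = p then axis p 1 else row i A)"
    by (simp add: vec_eq_iff reduce_diag_def row_def)
  finally show ?thesis
    by (simp add: det_row_axis)
qed

lemma det_of_int: "det (map_matrix of_int A :: 'a::comm_ring_1^'n^'n) = of_int (det A)"
  by (simp add: det_def of_int_sum of_int_mult of_int_prod)

lemma det_int_eq_0_if_mult_vec_eq_0:
  fixes A :: "int^'n^'n"
  assumes "A *v x = 0" and "x \<noteq> 0"
  shows "det A = 0"
proof -
  obtain k where k: "x $ k \<noteq> 0"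
    using assms(2) by (auto simp: vec_eq_iff)
  let ?R = "map_matrix real_of_int A" and ?y = "\<chi> i. real_of_int (x $ i)"
  have "?R *v ?y = (\<chi> i. real_of_int ((A *v x) $ i))"
    by (simp add: vec_eq_iff matrix_vector_mult_def)
  then have "?R *v ?y = 0"
    using assms(1) by (simp add: vec_eq_iff)
  then have "det (\<chi> i j. if j = k then (?R *v ?y) $ i else ?R $ i $ j) = 0"
    by (intro det_zero_column(2)[where j=k]) (simp add: column_def vec_eq_iff)
  then have "?y $ k * det ?R = 0"
    by (simp add: cramer_lemma)
  then show ?thesis
    using k by (simp add: det_of_int)
qed

section \<open>Diagonally dominant Z-matrices\<close>

definition row_sum :: "'n set \<Rightarrow> 'a::comm_monoid_add^'n^'n \<Rightarrow> 'n \<Rightarrow> 'a" where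
  "row_sum I A i = (\<Sum>j\<in>I. A $ i $ j)"

definition diag_dominant_Z_on :: "'n set \<Rightarrow> 'a::linordered_idom^'n^'n \<Rightarrow> bool" where
  "diag_dominant_Z_on I A \<longleftrightarrow>
     (\<forall>i\<in>I. \<forall>j\<in>I. i \<noteq> j \<longrightarrow> A $ i $ j \<le> 0) \<and> (\<forall>i\<in>I. 0 \<le> row_sum I A i)"

definition indicator_vec :: "'n set \<Rightarrow> 'a::zero_neq_one^'n" where
  "indicator_vec J = (\<chi> i. if i \<in> J then 1 else 0)"

lemma identity_outside_empty: "identity_outside {} A \<Longrightarrow> A = mat 1"
  by (simp add: identity_outside_def vec_eq_iff mat_def)

lemma mult_indicator_vec: "(A *v indicator_vec I) $ i = row_sum I A i"
  by (simp add: matrix_vector_mult_def indicator_vec_def row_sum_def if_distrib sum.If_cases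
           cong: if_cong)

lemma row_sum_eq_0_if_identity_outside:
  "identity_outside I A \<Longrightarrow> i \<notin> I \<Longrightarrow> row_sum I A i = 0"
  by (auto simp: identity_outside_def row_sum_def intro!: sum.neutral)

lemma det_eq_0_if_row_sums_eq_0:
  fixes A :: "int^'n^'n"
  assumes "identity_outside I A" and "I \<noteq> {}" and "\<forall>i\<in>I. row_sum I A i = 0"
  shows "det A = 0"
proof (rule det_int_eq_0_if_mult_vec_eq_0)
  show "A *v indicator_vec I = 0"
    using assms by (auto simp: vec_eq_iff mult_indicator_vec row_sum_eq_0_if_identity_outside)
  show "indicator_vec I \<noteq> (0::int^'n)"
    using assms(2) by (auto simp: indicator_vec_def vec_eq_iff)
qed

lemma identity_outside_reduce_diag:
  "identity_outside I A \<Longrightarrow> p \<in> I \<Longrightarrow> identity_outside I (reduce_diag p t A)"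
  by (auto simp: identity_outside_def reduce_diag_def)

lemma row_sum_reduce_diag:
  "p \<in> I \<Longrightarrow> row_sum I (reduce_diag p t A) i = (if i = p then row_sum I A i - t else row_sum I A i)"
  by (auto simp: row_sum_def reduce_diag_def sum.remove if_distrib cong: if_cong)

lemma diag_dominant_Z_on_reduce_diag:
  assumes "diag_dominant_Z_on I A" and "p \<in> I"
  shows "diag_dominant_Z_on I (reduce_diag p (row_sum I A p) A)"
  using assms by (auto simp: diag_dominant_Z_on_def row_sum_reduce_diag) (auto simp: reduce_diag_def)

lemma identity_outside_strike_index:
  "identity_outside I A \<Longrightarrow> identity_outside (I - {p}) (strike_index p A)"
  by (auto simp: identity_outside_def strike_index_def)

lemma row_sum_strike_index:
  fixes A :: "'a::ring_1^'n^'n"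
  shows "p \<in> I \<Longrightarrow> i \<noteq> p \<Longrightarrow> row_sum (I - {p}) (strike_index p A) i = row_sum I A i - A $ i $ p"
  by (simp add: row_sum_def strike_index_def sum.remove)

lemma diag_dominant_Z_on_strike_index:
  assumes dd: "diag_dominant_Z_on I A" and p: "p \<in> I"
  shows "diag_dominant_Z_on (I - {p}) (strike_index p A)"
  unfolding diag_dominant_Z_on_def
proof (intro conjI ballI impI)
  fix i j assume "i \<in> I - {p}" "j \<in> I - {p}" "i \<noteq> j"
  then show "strike_index p A $ i $ j \<le> 0"
    using dd by (simp add: diag_dominant_Z_on_def strike_index_def)
next
  fix i assume i: "i \<in> I - {p}"
  then have "A $ i $ p \<le> 0" "0 \<le> row_sum I A i"
    using dd p by (auto simp: diag_dominant_Z_on_def)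
  then show "0 \<le> row_sum (I - {p}) (strike_index p A) i"
    using i p by (simp add: row_sum_strike_index)
qed

lemma det_nonneg_if_diag_dominant_Z_on:
  fixes A :: "int^'n^'n"
  assumes "identity_outside I A" and "diag_dominant_Z_on I A"
  shows "0 \<le> det A"
  using assms
proof (induction "card I" arbitrary: I A rule: less_induct)
  case less
  note outer_IH = less.hyps
  show ?case
    using less.prems
  proof (induction "card {i\<in>I. row_sum I A i \<noteq> 0}" arbitrary: A rule: less_induct)
    case less
    show ?case
    proof (cases "\<exists>p\<in>I. row_sum I A p \<noteq> 0")
      case False
      then show ?thesis
        using less.prems det_eq_0_if_row_sums_eq_0 identity_outside_empty by fastforce
    next
      case True
      then obtain p where p: "p \<in> I" "row_sum I A p \<noteq> 0"
        by blast
      define t where "t = row_sum I A p"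
      have "0 < t"
        using p less.prems(2) by (auto simp: diag_dominant_Z_on_def t_def order.order_iff_strict)
      have "{i\<in>I. row_sum I (reduce_diag p t A) i \<noteq> 0} = {i\<in>I. row_sum I A i \<noteq> 0} - {p}"
        using p(1) by (auto simp: row_sum_reduce_diag t_def)
      then have "card {i\<in>I. row_sum I (reduce_diag p t A) i \<noteq> 0} < card {i\<in>I. row_sum I A i \<noteq> 0}"
        using p by (metis (mono_tags) card_Diff1_less finite mem_Collect_eq)
      then have "0 \<le> det (reduce_diag p t A)"
        using less.prems p(1) t_def
        by (intro less.hyps identity_outside_reduce_diag) (auto intro: diag_dominant_Z_on_reduce_diag)
      moreover have "0 \<le> det (strike_index p A)"
        using less.prems p(1)
        by (intro outer_IH[of "I - {p}"] card_Diff1_less identity_outside_strike_index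
                  diag_dominant_Z_on_strike_index) auto
      ultimately show ?thesis
        using \<open>0 < t\<close> by (simp add: det_reduce_diag_strike_index[of A p t])
    qed
  qed
qed

section \<open>The lattice form\<close>

lemma lat_form_mult_vec: "lat_form G x y = (\<Sum>i\<in>UNIV. x $ i * (G *v y) $ i)"
  by (simp add: lat_form_def matrix_vector_mult_def sum_distrib_left mult.assoc)

lemma lat_form_sum_left: "lat_form G (sum f S) y = (\<Sum>s\<in>S. lat_form G (f s) y)"
  by (simp add: lat_form_mult_vec sum_distrib_right sum.swap[of _ S])

lemma lat_form_sum_right: "lat_form G x (sum f S) = (\<Sum>s\<in>S. lat_form G x (f s))"
  by (simp add: lat_form_def sum_distrib_left sum_distrib_right mult_ac sum.swap[of _ S])

lemma lat_form_uminus_left [simp]: "lat_form G (- x) y = - lat_form G x y"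
  by (simp add: lat_form_def sum_negf)

lemma lat_form_uminus_right [simp]: "lat_form G x (- y) = - lat_form G x y"
  by (simp add: lat_form_def sum_negf)

lemma lat_form_congruence:
  "lat_form (transpose P ** G ** P) x y = lat_form G (P *v x) (P *v y)"
proof -
  have "lat_form G (P *v x) (P *v y) = (\<Sum>i\<in>UNIV. \<Sum>c\<in>UNIV. P $ i $ c * x $ c * (G *v (P *v y)) $ i)"
    by (simp add: lat_form_mult_vec matrix_vector_mult_def sum_distrib_right)
  also have "\<dots> = (\<Sum>c\<in>UNIV. x $ c * (transpose P *v (G *v (P *v y))) $ c)"
    by (subst sum.swap) (simp add: matrix_vector_mult_def transpose_def sum_distrib_left mult_ac)
  finally show ?thesis
    by (simp add: lat_form_mult_vec matrix_vector_mul_assoc matrix_mul_assoc)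
qed

lemma lat_form_axis_axis: "lat_form A (axis k 1) (axis l 1) = A $ k $ l"
  by (simp add: lat_form_def axis_def if_distrib[of "\<lambda>x. x * _"] if_distrib[of "\<lambda>x. _ * x"] cong: if_cong)

lemma lat_form_indicator_vec:
  "lat_form A (indicator_vec J) (indicator_vec J) = (\<Sum>i\<in>J. \<Sum>j\<in>J. A $ i $ j)"
proof -
  have "lat_form A (indicator_vec J) (indicator_vec J) = (\<Sum>i\<in>UNIV. if i \<in> J then row_sum J A i else 0)"
    unfolding lat_form_mult_vec mult_indicator_vec by (intro sum.cong) (auto simp: indicator_vec_def)
  then show ?thesis
    by (simp add: sum.If_cases row_sum_def)
qed

lemma lat_form_strike_index:
  "x $ p = 0 \<Longrightarrow> y $ p = 0 \<Longrightarrow> lat_form (strike_index p A) x y = lat_form A x y"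
  unfolding lat_form_def strike_index_def by (auto intro!: sum.cong)

definition supported_on :: "'n set \<Rightarrow> 'a::zero^'n \<Rightarrow> bool" where
  "supported_on I x \<longleftrightarrow> (\<forall>i. i \<notin> I \<longrightarrow> x $ i = 0)"

lemma indicator_vec_eq_0_iff [simp]: "indicator_vec J = 0 \<longleftrightarrow> J = {}"
  by (auto simp: indicator_vec_def vec_eq_iff)

lemma supported_on_indicator_vec: "J \<subseteq> I \<Longrightarrow> supported_on I (indicator_vec J)"
  by (auto simp: supported_on_def indicator_vec_def)

lemma lat_form_lower_bound_strike_index:
  assumes "\<forall>x. x \<noteq> 0 \<and> supported_on I x \<longrightarrow> c \<le> lat_form A x x"
  shows "\<forall>x. x \<noteq> 0 \<and> supported_on (I - {p}) x \<longrightarrow> c \<le> lat_form (strike_index p A) x x"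
  using assms by (auto simp: supported_on_def lat_form_strike_index)

section \<open>Determinant versus sum of entries\<close>

lemma transpose_strike_index: "transpose A = A \<Longrightarrow> transpose (strike_index p A) = strike_index p A"
  by (simp add: vec_eq_iff transpose_def strike_index_def)

lemma sum_entries_strike_index:
  "(\<Sum>i\<in>I - {p}. \<Sum>j\<in>I - {p}. strike_index p A $ i $ j) = (\<Sum>i\<in>I - {p}. \<Sum>j\<in>I - {p}. A $ i $ j)"
  by (auto simp: strike_index_def intro!: sum.cong)

lemma sum_entries_remove:
  fixes A :: "'a::comm_ring_1^'n^'n"
  assumes "transpose A = A" and "p \<in> I"
  shows "(\<Sum>i\<in>I. \<Sum>j\<in>I. A $ i $ j)
           = 2 * row_sum I A p - A $ p $ p + (\<Sum>i\<in>I - {p}. \<Sum>j\<in>I - {p}. A $ i $ j)"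
proof -
  have "(\<Sum>i\<in>I - {p}. A $ i $ p) = row_sum (I - {p}) (transpose A) p"
    by (simp add: row_sum_def transpose_def)
  also have "\<dots> = row_sum I A p - A $ p $ p"
    using assms by (simp add: row_sum_def sum_diff1)
  finally have col: "(\<Sum>i\<in>I - {p}. A $ i $ p) = row_sum I A p - A $ p $ p" .
  have "(\<Sum>i\<in>I. \<Sum>j\<in>I. A $ i $ j) = row_sum I A p + (\<Sum>i\<in>I - {p}. \<Sum>j\<in>I. A $ i $ j)"
    using assms(2) unfolding row_sum_def by (simp add: sum_diff1)
  also have "(\<Sum>i\<in>I - {p}. \<Sum>j\<in>I. A $ i $ j) = (\<Sum>i\<in>I - {p}. A $ i $ p + (\<Sum>j\<in>I - {p}. A $ i $ j))"
    using assms(2) by (intro sum.cong refl) (simp add: sum_diff1)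
  finally show ?thesis
    by (simp add: sum.distrib col)
qed

lemma exists_row_sum_pos:
  fixes A :: "'a::linordered_idom^'n^'n"
  assumes "0 < (\<Sum>i\<in>I. \<Sum>j\<in>I. A $ i $ j)"
  obtains p where "p \<in> I" and "0 < row_sum I A p"
  using assms sum_nonpos[of I "row_sum I A"] unfolding row_sum_def by (meson not_le)

lemma row_sum_mult_det_strike_index_le_det:
  fixes A :: "int^'n^'n"
  assumes "identity_outside I A" and "diag_dominant_Z_on I A" and "p \<in> I"
  shows "row_sum I A p * det (strike_index p A) \<le> det A"
proof -
  have "0 \<le> det (reduce_diag p (row_sum I A p) A)"
    using assms
    by (meson det_nonneg_if_diag_dominant_Z_on identity_outside_reduce_diag diag_dominant_Z_on_reduce_diag)
  then show ?thesis
    using det_reduce_diag_strike_index[of A p "row_sum I A p"] by simp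
qed

lemma sum_entries_ge_2:
  assumes "\<forall>x. x \<noteq> 0 \<and> supported_on I x \<longrightarrow> 2 \<le> lat_form A x x" and "J \<subseteq> I" and "J \<noteq> {}"
  shows "2 \<le> (\<Sum>i\<in>J. \<Sum>j\<in>J. A $ i $ j)"
proof -
  have "2 \<le> lat_form A (indicator_vec J) (indicator_vec J)"
    using assms(1)[rule_format, of "indicator_vec J"] supported_on_indicator_vec[OF assms(2)] assms(3)
    by simp
  then show ?thesis
    by (simp add: lat_form_indicator_vec)
qed

text \<open>The Gram matrix of all but one vector of an obtuse superbase of a lattice without vectors
  of norm one has this shape on \<open>I = UNIV\<close>.\<close>

definition obtuse_gram_on :: "'n set \<Rightarrow> int^'n^'n \<Rightarrow> bool" where
  "obtuse_gram_on I A \<longleftrightarrow> identity_outside I A \<and> diag_dominant_Z_on I A \<and> transpose A = A \<and>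
     (\<forall>x. x \<noteq> 0 \<and> supported_on I x \<longrightarrow> 2 \<le> lat_form A x x)"

lemma obtuse_gram_on_strike_index:
  assumes "obtuse_gram_on I A" and "p \<in> I"
  shows "obtuse_gram_on (I - {p}) (strike_index p A)"
  using assms unfolding obtuse_gram_on_def
  by (meson identity_outside_strike_index diag_dominant_Z_on_strike_index transpose_strike_index
      lat_form_lower_bound_strike_index)

lemma sum_entries_le_det_step:
  assumes A: "obtuse_gram_on I A" and p: "p \<in> I" and t: "0 < row_sum I A p"
    and minor: "(\<Sum>i\<in>I - {p}. \<Sum>j\<in>I - {p}. A $ i $ j) \<le> det (strike_index p A)"
  shows "(\<Sum>i\<in>I. \<Sum>j\<in>I. A $ i $ j) \<le> det A"
proof -
  define t where "t = row_sum I A p"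
  define J where "J = I - {p}"
  define a where "a = (\<Sum>i\<in>J. \<Sum>j\<in>J. A $ i $ j)"
  have A_parts: "identity_outside I A" "diag_dominant_Z_on I A" "transpose A = A"
      "\<forall>x. x \<noteq> 0 \<and> supported_on I x \<longrightarrow> 2 \<le> lat_form A x x"
    using A by (simp_all add: obtuse_gram_on_def)
  have det_A: "t * det (strike_index p A) \<le> det A"
    using A_parts(1,2) p unfolding t_def by (rule row_sum_mult_det_strike_index_le_det)
  have sum_A: "(\<Sum>i\<in>I. \<Sum>j\<in>I. A $ i $ j) = 2 * t - A $ p $ p + a"
    using sum_entries_remove[OF A_parts(3) p] by (simp add: t_def J_def a_def)
  show ?thesis
  proof (cases "J = {}")
    case True
    then have "strike_index p A = mat 1"
      using A_parts(1) identity_outside_strike_index identity_outside_empty unfolding J_def by metis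
    moreover have "I = {p}"
      using True p by (auto simp: J_def)
    ultimately show ?thesis
      using det_A sum_A True by (simp add: t_def row_sum_def a_def)
  next
    case False
    have "2 \<le> a"
      using sum_entries_ge_2[OF A_parts(4), of J] False by (auto simp: a_def J_def)
    moreover have "2 \<le> A $ p $ p"
      using sum_entries_ge_2[OF A_parts(4), of "{p}"] p by simp
    moreover have "(t - 1) * 2 \<le> (t - 1) * a"
      using \<open>2 \<le> a\<close> t unfolding t_def by (intro mult_left_mono) auto
    ultimately have "2 * t - A $ p $ p + a \<le> t * a"
      by (simp add: algebra_simps)
    also have "\<dots> \<le> det A"
      using det_A minor t unfolding t_def a_def J_def by (meson mult_left_mono order.trans less_imp_le)
    finally show ?thesis
      using sum_A by simp
  qed
qed

theorem sum_entries_le_det: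
  assumes "obtuse_gram_on I A"
  shows "(\<Sum>i\<in>I. \<Sum>j\<in>I. A $ i $ j) \<le> det A"
  using assms
proof (induction "card I" arbitrary: I A rule: less_induct)
  case less
  show ?case
  proof (cases "I = {}")
    case True
    then have "A = mat 1"
      using less.prems identity_outside_empty unfolding obtuse_gram_on_def by blast
    then show ?thesis
      using True by simp
  next
    case False
    have "2 \<le> (\<Sum>i\<in>I. \<Sum>j\<in>I. A $ i $ j)"
      using less.prems False sum_entries_ge_2[of I A I] unfolding obtuse_gram_on_def by blast
    then obtain p where p: "p \<in> I" and t: "0 < row_sum I A p"
      using exists_row_sum_pos by (metis less_le_trans zero_less_numeral)
    have "(\<Sum>i\<in>I - {p}. \<Sum>j\<in>I - {p}. strike_index p A $ i $ j) \<le> det (strike_index p A)"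
    proof (rule less.hyps)
      show "card (I - {p}) < card I"
        using p by (rule card_Diff1_less[OF finite])
      show "obtuse_gram_on (I - {p}) (strike_index p A)"
        using less.prems p by (rule obtuse_gram_on_strike_index)
    qed
    then show ?thesis
      using sum_entries_le_det_step[OF less.prems p t] by (simp add: sum_entries_strike_index)
  qed
qed

section \<open>Obtuse superbases\<close>

definition skip :: "'n option \<Rightarrow> 'n \<Rightarrow> 'n option" where
  "skip i k = (if i = Some k then None else Some k)"

lemma skip_neq: "skip i k \<noteq> i"
  by (cases i) (auto simp: skip_def)

lemma inj_skip: "inj (skip i)"
  unfolding inj_def skip_def by auto

lemma range_skip: "range (skip i) = - {i}"
proof
  show "range (skip i) \<subseteq> - {i}"
    by (auto simp: skip_def)
  show "- {i} \<subseteq> range (skip i)"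
  proof
    fix j assume j: "j \<in> - {i}"
    show "j \<in> range (skip i)"
    proof (cases j)
      case None
      then obtain m where "i = Some m"
        using j by (cases i) auto
      then have "skip i m = j"
        using None by (simp add: skip_def)
      then show ?thesis
        by blast
    next
      case (Some m)
      then have "skip i m = j"
        using j by (auto simp: skip_def)
      then show ?thesis
        by blast
    qed
  qed
qed

lemma sum_skip:
  fixes f :: "'n::finite option \<Rightarrow> 'a::comm_monoid_add"
  shows "(\<Sum>j\<in>UNIV. f j) = f i + (\<Sum>k\<in>UNIV. f (skip i k))"
proof -
  have "(\<Sum>j\<in>UNIV. f j) = f i + sum f (UNIV - {i})"
    by (rule sum.remove) simp_all
  also have "UNIV - {i} = range (skip i)"
    by (simp add: range_skip Compl_eq_Diff_UNIV)
  also have "sum f (range (skip i)) = (\<Sum>k\<in>UNIV. f (skip i k))"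
    by (simp add: sum.reindex inj_skip)
  finally show ?thesis .
qed

lemma sum_skip_eq_uminus:
  fixes v :: "'n::finite option \<Rightarrow> 'a::ab_group_add"
  shows "(\<Sum>j\<in>UNIV. v j) = 0 \<Longrightarrow> (\<Sum>k\<in>UNIV. v (skip i k)) = - v i"
  using sum_skip[of v i] by (simp add: eq_neg_iff_add_eq_0 add.commute)

definition basis_matrix :: "('n option \<Rightarrow> 'a^'n) \<Rightarrow> 'n option \<Rightarrow> 'a^'n^'n" where
  "basis_matrix v i = (\<chi> r c. v (skip i c) $ r)"

lemma basis_matrix_mult_vec:
  fixes v :: "'n option \<Rightarrow> 'a::comm_semiring_1^'n"
  shows "basis_matrix v i *v x = (\<Sum>k\<in>UNIV. x $ k *s v (skip i k))"
  by (simp add: vec_eq_iff basis_matrix_def matrix_vector_mult_def mult.commute)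

lemma basis_matrix_mult_axis:
  fixes v :: "'n option \<Rightarrow> 'a::comm_semiring_1^'n"
  shows "basis_matrix v i *v axis k 1 = v (skip i k)"
  by (simp add: basis_matrix_mult_vec axis_def if_distrib[of "\<lambda>a. a *s _"] cong: if_cong)

lemma combination_eq_basis_matrix_mult_vec:
  fixes v :: "'n option \<Rightarrow> 'a::comm_ring_1^'n"
  assumes "(\<Sum>j\<in>UNIV. v j) = 0"
  shows "(\<Sum>j\<in>UNIV. c j *s v j) = basis_matrix v i *v (\<chi> k. c (skip i k) - c i)"
proof -
  have "v i = - (\<Sum>k\<in>UNIV. v (skip i k))"
    using assms sum_skip[of v i] by (simp add: eq_neg_iff_add_eq_0)
  then have "(\<Sum>j\<in>UNIV. c j *s v j) = (\<Sum>k\<in>UNIV. c (skip i k) *s v (skip i k)) - c i *s (\<Sum>k\<in>UNIV. v (skip i k))"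
    using sum_skip[of "\<lambda>j. c j *s v j" i] by simp
  also have "\<dots> = (\<Sum>k\<in>UNIV. (c (skip i k) - c i) *s v (skip i k))"
    by (simp add: vec_eq_iff sum_component left_diff_distrib sum_subtractf sum_distrib_left)
  finally show ?thesis
    by (simp add: basis_matrix_mult_vec)
qed

lemma abs_det_eq_1_if_mult_vec_surj:
  fixes P :: "int^'n^'n"
  assumes "\<And>y. \<exists>x. P *v x = y"
  shows "\<bar>det P\<bar> = 1"
proof -
  have "\<forall>m. \<exists>z. P *v z = axis m 1"
    using assms by blast
  then obtain x where x: "\<And>m. P *v x m = axis m 1"
    by metis
  define Q :: "int^'n^'n" where "Q = (\<chi> r m. x m $ r)"
  have "(P ** Q) $ r $ m = mat 1 $ r $ m" for r m
    using arg_cong[where f="\<lambda>y. y $ r", OF x[of m]]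
    by (simp add: Q_def matrix_matrix_mult_def matrix_vector_mult_def axis_def mat_def)
  then have "P ** Q = mat 1"
    by (simp add: vec_eq_iff)
  then have "det P * det Q = 1"
    by (metis det_I det_mul)
  then show ?thesis
    by (auto simp: zmult_eq_1_iff)
qed

lemma abs_det_basis_matrix:
  assumes "obtuse_superbase G v"
  shows "\<bar>det (basis_matrix v i)\<bar> = 1"
proof (rule abs_det_eq_1_if_mult_vec_surj)
  fix y
  obtain c where "y = (\<Sum>j\<in>UNIV. c j *s v j)"
    using assms unfolding obtuse_superbase_def by blast
  then have "y = basis_matrix v i *v (\<chi> k. c (skip i k) - c i)"
    using assms by (simp add: obtuse_superbase_def combination_eq_basis_matrix_mult_vec)
  then show "\<exists>x. basis_matrix v i *v x = y"
    by blast
qed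

definition reduced_gram :: "int^'n^'n \<Rightarrow> ('n option \<Rightarrow> int^'n) \<Rightarrow> 'n option \<Rightarrow> int^'n^'n" where
  "reduced_gram G v i = transpose (basis_matrix v i) ** G ** basis_matrix v i"

lemma reduced_gram_entry: "reduced_gram G v i $ k $ l = lat_form G (v (skip i k)) (v (skip i l))"
  using lat_form_congruence[of "basis_matrix v i" G "axis k 1" "axis l 1"]
  by (simp add: reduced_gram_def lat_form_axis_axis basis_matrix_mult_axis)

lemma transpose_reduced_gram: "transpose G = G \<Longrightarrow> transpose (reduced_gram G v i) = reduced_gram G v i"
  by (simp add: reduced_gram_def matrix_transpose_mul matrix_mul_assoc)

lemma sum_entries_reduced_gram:
  assumes "(\<Sum>j\<in>UNIV. v j) = 0"
  shows "(\<Sum>k\<in>UNIV. \<Sum>l\<in>UNIV. reduced_gram G v i $ k $ l) = lat_form G (v i) (v i)"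
proof -
  have "(\<Sum>k\<in>UNIV. \<Sum>l\<in>UNIV. reduced_gram G v i $ k $ l)
          = lat_form G (\<Sum>k\<in>UNIV. v (skip i k)) (\<Sum>l\<in>UNIV. v (skip i l))"
    by (simp only: lat_form_sum_left) (simp only: lat_form_sum_right reduced_gram_entry)
  then show ?thesis
    using sum_skip_eq_uminus[OF assms, of i] by simp
qed

lemma diag_dominant_Z_on_reduced_gram:
  assumes "obtuse_superbase G v"
  shows "diag_dominant_Z_on UNIV (reduced_gram G v i)"
proof -
  have obtuse: "j \<noteq> l \<Longrightarrow> lat_form G (v j) (v l) \<le> 0" for j l
    using assms by (simp add: obtuse_superbase_def)
  have "row_sum UNIV (reduced_gram G v i) k = - lat_form G (v (skip i k)) (v i)" for k
    using sum_skip_eq_uminus[of v i] assms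
    by (simp add: obtuse_superbase_def row_sum_def reduced_gram_entry flip: lat_form_sum_right)
  moreover have "reduced_gram G v i $ k $ l \<le> 0" if "k \<noteq> l" for k l
    using obtuse[of "skip i k" "skip i l"] that inj_skip[of i] by (simp add: reduced_gram_entry inj_eq)
  ultimately show ?thesis
    using obtuse[OF skip_neq] by (simp add: diag_dominant_Z_on_def)
qed

lemma det_reduced_gram:
  assumes "obtuse_superbase G v"
  shows "det (reduced_gram G v i) = det G"
proof -
  have "det (basis_matrix v i) * det (basis_matrix v i) = 1"
    using abs_det_basis_matrix[OF assms, of i] by (metis abs_mult_self_eq mult_1)
  then show ?thesis
    by (simp add: reduced_gram_def det_mul)
qed

lemma lat_form_reduced_gram_ge_2:
  assumes "integral_lattice G" and "\<forall>x. lat_form G x x \<noteq> 1" and "obtuse_superbase G v"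
    and "x \<noteq> 0"
  shows "2 \<le> lat_form (reduced_gram G v i) x x"
proof -
  have "det (basis_matrix v i) \<noteq> 0"
    using abs_det_basis_matrix[OF assms(3), of i] by auto
  then have "basis_matrix v i *v x \<noteq> 0"
    using det_int_eq_0_if_mult_vec_eq_0 assms(4) by blast
  then have "0 < lat_form G (basis_matrix v i *v x) (basis_matrix v i *v x)"
    using assms(1) by (simp add: integral_lattice_def)
  moreover have "lat_form G (basis_matrix v i *v x) (basis_matrix v i *v x) \<noteq> 1"
    using assms(2) by blast
  ultimately show ?thesis
    by (simp add: reduced_gram_def lat_form_congruence)
qed

lemma obtuse_gram_on_reduced_gram:
  assumes "integral_lattice G" and "\<forall>x. lat_form G x x \<noteq> 1" and "obtuse_superbase G v"
  shows "obtuse_gram_on UNIV (reduced_gram G v i)"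
  using assms(1) diag_dominant_Z_on_reduced_gram[OF assms(3)] lat_form_reduced_gram_ge_2[OF assms]
  by (auto simp: obtuse_gram_on_def identity_outside_def integral_lattice_def transpose_reduced_gram)

theorem lemma2p10:
  fixes G :: "int^'n^'n" and v :: "'n option \<Rightarrow> int^'n" and i :: "'n option"
  assumes "integral_lattice G"
    and "\<forall>x. lat_form G x x \<noteq> 1"
    and "obtuse_superbase G v"
  shows "lat_form G (v i) (v i) \<le> disc G"
proof -
  let ?M = "reduced_gram G v i"
  have "lat_form G (v i) (v i) = (\<Sum>k\<in>UNIV. \<Sum>l\<in>UNIV. ?M $ k $ l)"
    using assms(3) by (simp add: obtuse_superbase_def sum_entries_reduced_gram)
  also have "\<dots> \<le> det ?M"
    using obtuse_gram_on_reduced_gram[OF assms] by (rule sum_entries_le_det)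
  also have "\<dots> = disc G"
    using assms(3) by (simp add: det_reduced_gram disc_def)
  finally show ?thesis .
qed

end
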